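(* Consider $n\ge 2$ unit-speed aircraft with positions $p_i\in\mathbb{R}^2$ and headings $\psi_i\in(-\pi,\pi]$ obeying $\dot p_i=(\cos\psi_i,\sin\psi_i)^T$, $\dot\psi_i=u_{\psi_i}$, $i\in\{1,\dots,n\}$. Let $\mathbb{G}=(\mathcal{V},\mathcal{E})$ be a connected graph on $\mathcal{V}=\{1,\dots,n\}$ with incidence matrix $B$, and assume $\mathbb{G}$ does not contain any cycles. Fix $r>0$, desired angles $z_k^*\in\mathbb{S}^1$ for $k\in\{1,\dots,|\mathcal{E}|\}$, and a gain $k_r>0$ with $r-\pi k_r\max_{i\in\mathcal{V}}|\mathcal{N}_i|>0$. Let $\theta_i=\operatorname{atan2}(p_{i,y},p_{i,x})$ be the angle of vehicle $i$ about the origin, $\theta=(\theta_1,\dots,\theta_n)^T$, $z=B^T\theta$, and let the formation error $e_\theta\in\mathbb{T}^{|\mathcal{E}|}$ have components $e_{\theta_k}=z_k-z_k^*\in\mathbb{S}^1$, represented in $(-\pi,\pi]$. Each vehicle $i$ uses the control $^iu_r=k_rB_ie_\theta$ (where $B_i$ is the $i$-th row of $B$), sets $^ic={^iu_r}^2+2r\,{^iu_r}$, and tracks the curve $^i\mathcal{C}=\{p:\varphi(p)={^ic}\}$ (equivalently the circle of radius $r+{^iu_r}$ centered at the origin), with $\varphi(p)=p_x^2+p_y^2-r^2$, by employing the guidance steering law described in the context. Assume (Assumption 1) that each vehicle $i$ is always tracking and traveling over $^i\mathcal{C}$, so that its angular velocity about the origin is $\dot\theta_i=1/(r+{^iu_r})=1/(r+k_rB_ie_\theta)$.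 Then the origin $e_\theta=0$ of the error dynamics is locally exponentially stable.
   Context: $\mathcal{N}_i=\{j\in\mathcal{V}:(i,j)\in\mathcal{E}\}$ is the neighbor set of vehicle $i$. Edges are ordered pairs $\mathcal{E}_k=(\mathcal{E}_k^{\text{tail}},\mathcal{E}_k^{\text{head}})$; the incidence matrix $B\in\mathbb{R}^{|\mathcal{V}|\times|\mathcal{E}|}$ has entries $b_{ik}=+1$ if $i=\mathcal{E}_k^{\text{tail}}$, $-1$ if $i=\mathcal{E}_k^{\text{head}}$, $0$ otherwise. A cycle is a path (sequence of vertices with consecutive ones adjacent) starting and ending at the same vertex; connected means any two vertices are joined by a path. $\mathbb{S}^1$ is the circle group and $\mathbb{T}^m$ the $m$-torus. Guidance law: for a curve given as a level set $\{\varphi(p)=c\}$, with error $e(p)=\varphi(p)-c$, normal $n(p)=\nabla\varphi(p)$, tangent $\tau(p)=En(p)$ with $E=\begin{bmatrix}0&1\\-1&0\end{bmatrix}$, the guidance vector field is $\dot p_d=\tau-k_e e\,n$ with $k_e>0$, and the steering input is $u_\psi=-\left(E\hat{\dot p}_d\hat{\dot p}_d^TE\left((E-k_ee)H(\varphi)\dot p-k_e n^T\dot p\, n\right)\right)^TE\frac{\dot p_d}{\|\dot p_d\|^2}+k_d\hat{\dot p}^TE\hat{\dot p}_d$ with $k_d>0$, where $H$ is the Hessian and $\hat x$ denotes $x/\|x\|$. *)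

theory Defs
  imports "HOL-Analysis.Analysis"
begin

text \<open>Graphs on the vertex set {0..<n} (vertex i+1 of the paper is i here) with
  oriented edges given as a list E; edge k (k < length E) is E!k = (tail, head).\<close>

definition adj :: "(nat \<times> nat) list \<Rightarrow> nat \<Rightarrow> nat \<Rightarrow> bool" where
  "adj E i j \<longleftrightarrow> (i, j) \<in> set E \<or> (j, i) \<in> set E"

definition simple_graph :: "nat \<Rightarrow> (nat \<times> nat) list \<Rightarrow> bool" where
  "simple_graph n E \<longleftrightarrow>
     (\<forall>(i, j) \<in> set E. i < n \<and> j < n \<and> i \<noteq> j) \<and>
     (\<forall>k < length E. \<forall>l < length E. k \<noteq> l \<longrightarrow>
        E!k \<noteq> E!l \<and> E!k \<noteq> (snd (E!l), fst (E!l)))"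

definition is_path :: "(nat \<times> nat) list \<Rightarrow> nat list \<Rightarrow> bool" where
  "is_path E ps \<longleftrightarrow> ps \<noteq> [] \<and> (\<forall>k. Suc k < length ps \<longrightarrow> adj E (ps!k) (ps!Suc k))"

definition graph_connected :: "nat \<Rightarrow> (nat \<times> nat) list \<Rightarrow> bool" where
  "graph_connected n E \<longleftrightarrow>
     (\<forall>i < n. \<forall>j < n. \<exists>ps. is_path E ps \<and> hd ps = i \<and> last ps = j)"

text \<open>A cycle: a closed path v0 v1 ... v(k-1) v0 with k \<ge> 3 distinct vertices
  (the non-degenerate reading of "a path starting and ending at the same vertex").\<close>
definition has_cycle :: "(nat \<times> nat) list \<Rightarrow> bool" where
  "has_cycle E \<longleftrightarrow>
     (\<exists>vs. length vs \<ge> 3 \<and> distinct vs \<and> is_path E (vs @ [hd vs]))"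

definition inc :: "(nat \<times> nat) list \<Rightarrow> nat \<Rightarrow> nat \<Rightarrow> real" where
  "inc E i k = (if i = fst (E!k) then 1 else if i = snd (E!k) then -1 else 0)"

definition nbrs :: "(nat \<times> nat) list \<Rightarrow> nat \<Rightarrow> nat set" where
  "nbrs E i = {j. adj E i j}"

text \<open>Representative of an angle in (-pi, pi].\<close>
definition wrap :: "real \<Rightarrow> real" where
  "wrap x = x - 2 * pi * of_int \<lceil>(x - pi) / (2 * pi)\<rceil>"

definition err :: "nat \<Rightarrow> (nat \<times> nat) list \<Rightarrow> (nat \<Rightarrow> real) \<Rightarrow> (real \<Rightarrow> nat \<Rightarrow> real)
                    \<Rightarrow> real \<Rightarrow> nat \<Rightarrow> real" where
  "err n E zs \<theta> t k = wrap ((\<Sum>i<n. inc E i k * \<theta> t i) - zs k)"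

definition vnorm :: "nat \<Rightarrow> (nat \<Rightarrow> real) \<Rightarrow> real" where
  "vnorm m v = sqrt (\<Sum>k<m. (v k)\<^sup>2)"

end

theory Submission
  imports Defs
begin

text \<open>Since the graph is a forest, its incidence matrix B has trivial kernel, hence
  |B e|^2 \<ge> L |e|^2 for some L > 0. Along the closed loop, with u = B e the derivative of
  V = |e|^2 is 2 \<Sum>_i u_i / (r + kr u_i); as \<Sum>_i u_i = 0 this equals
  2 \<Sum>_i (u_i / (r + kr u_i) - u_i / r) \<le> -(kr / r^2) |u|^2 \<le> -(kr L / r^2) V as long as
  the error is small, so V decays exponentially. A first-exit argument shows that an error
  starting small stays in the region where this estimate holds and the wrapped angles are
  smooth.\<close>

lemma wrap_bounds: "- pi < wrap x" "wrap x \<le> pi"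
proof -
  define q where "q = (x - pi) / (2 * pi)"
  have w: "wrap x = pi + 2 * pi * (q - of_int \<lceil>q\<rceil>)"
    unfolding wrap_def q_def by (simp add: field_simps)
  have "0 < 1 + (q - of_int \<lceil>q\<rceil>)" "q - of_int \<lceil>q\<rceil> \<le> 0" by linarith+
  then have "0 < 2 * pi * (1 + (q - of_int \<lceil>q\<rceil>))" "2 * pi * (q - of_int \<lceil>q\<rceil>) \<le> 0"
    by (simp_all add: mult_le_0_iff)
  then show "- pi < wrap x" "wrap x \<le> pi"
    unfolding w by (simp_all add: algebra_simps)
qed

lemma cos_wrap [simp]: "cos (wrap x) = cos x"
  unfolding wrap_def by (simp add: cos_diff)

lemma wrap_has_derivative:
  assumes "\<bar>wrap x\<bar> < pi"
  shows "(wrap has_real_derivative 1) (at x)"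
proof -
  define j where "j = \<lceil>(x - pi) / (2 * pi)\<rceil>"
  define S where "S = {y. of_int j - 1 < (y - pi) / (2 * pi) \<and> (y - pi) / (2 * pi) < of_int j}"
  have wx: "wrap x = x - 2 * pi * of_int j" unfolding wrap_def j_def by simp
  have "open S" unfolding S_def
    by (intro open_Collect_conj open_Collect_less continuous_intros) auto
  moreover have "x \<in> S"
  proof -
    have "of_int j - 1 < (x - pi) / (2 * pi)" unfolding j_def by linarith
    moreover have "x - pi < 2 * pi * of_int j" using assms wx by (simp add: abs_less_iff)
    ultimately show ?thesis unfolding S_def by (simp add: divide_less_eq mult.commute)
  qed
  moreover have "wrap y = y - 2 * pi * of_int j" if "y \<in> S" for y
  proof -
    have "\<lceil>(y - pi) / (2 * pi)\<rceil> = j" using that unfolding S_def by (simp add: ceiling_eq_iff)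
    then show ?thesis unfolding wrap_def by simp
  qed
  moreover have "((\<lambda>y. y - 2 * pi * of_int j) has_real_derivative 1) (at x)"
    by (auto intro!: derivative_eq_intros)
  ultimately show ?thesis
    using has_field_derivative_transform_within_open by (metis (no_types, lifting))
qed

lemma abs_wrap_le_iff_cos_le:
  assumes "0 \<le> \<rho>" "\<rho> \<le> pi"
  shows "\<bar>wrap x\<bar> \<le> \<rho> \<longleftrightarrow> cos \<rho> \<le> cos x"
proof -
  have "cos \<bar>wrap x\<bar> = cos x" by (simp add: abs_if)
  then show ?thesis
    using cos_mono_le_eq[of \<rho> "\<bar>wrap x\<bar>"] wrap_bounds[of x] assms by simp
qed

definition incident :: "(nat \<times> nat) list \<Rightarrow> nat \<Rightarrow> nat \<Rightarrow> bool" where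
  "incident E k v \<longleftrightarrow> v = fst (E!k) \<or> v = snd (E!k)"

definition opposite :: "(nat \<times> nat) list \<Rightarrow> nat \<Rightarrow> nat \<Rightarrow> nat" where
  "opposite E k v = (if v = fst (E!k) then snd (E!k) else fst (E!k))"

lemma simple_graph_edge:
  assumes "simple_graph n E" "k < length E"
  shows "fst (E!k) < n" "snd (E!k) < n" "fst (E!k) \<noteq> snd (E!k)"
proof -
  have "E!k \<in> set E" using assms(2) by simp
  then show "fst (E!k) < n" "snd (E!k) < n" "fst (E!k) \<noteq> snd (E!k)"
    using assms(1) unfolding simple_graph_def by auto
qed

lemma opposite_props:
  assumes "simple_graph n E" "k < length E" "incident E k v"
  shows "opposite E k v \<noteq> v" "v < n" "opposite E k v < n" "incident E k (opposite E k v)"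
    "adj E v (opposite E k v)"
proof -
  have "E!k \<in> set E" using assms(2) by simp
  then show "opposite E k v \<noteq> v" "v < n" "opposite E k v < n" "incident E k (opposite E k v)"
    "adj E v (opposite E k v)"
    using simple_graph_edge[OF assms(1,2)] assms(3)
    unfolding opposite_def incident_def adj_def by auto
qed

lemma opposite_inj:
  assumes "simple_graph n E" "k < length E" "k' < length E" "k \<noteq> k'"
    and "incident E k v" "incident E k' v"
  shows "opposite E k v \<noteq> opposite E k' v"
proof -
  have "E!k \<noteq> E!k'" "E!k \<noteq> (snd (E!k'), fst (E!k'))"
    using assms(1-4) unfolding simple_graph_def by auto
  then show ?thesis
    using assms(5,6) unfolding opposite_def incident_def by (auto simp: prod_eq_iff)
qed

lemma inc_eq_0_iff: "inc E v k = 0 \<longleftrightarrow> \<not> incident E k v"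
  unfolding inc_def incident_def by auto

lemma kernel_support_no_leaf:
  assumes sg: "simple_graph n E"
    and ker: "\<forall>i<n. (\<Sum>k<length E. inc E i k * e k) = 0"
    and k: "k < length E" "e k \<noteq> 0" "incident E k v"
  shows "\<exists>k'<length E. e k' \<noteq> 0 \<and> k' \<noteq> k \<and> incident E k' v"
proof (rule ccontr)
  assume "\<not> ?thesis"
  then have others: "inc E v k' * e k' = 0" if "k' \<in> {..<length E} - {k}" for k'
    using that inc_eq_0_iff by fastforce
  have "v < n" using opposite_props(2)[OF sg k(1) k(3)] .
  then have "0 = (\<Sum>k'<length E. inc E v k' * e k')" using ker by simp
  also have "\<dots> = inc E v k * e k + (\<Sum>k'\<in>{..<length E} - {k}. inc E v k' * e k')"
    using k(1) by (subst sum.remove[of _ k]) auto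
  also have "(\<Sum>k'\<in>{..<length E} - {k}. inc E v k' * e k') = 0"
    by (rule sum.neutral) (use others in blast)
  finally show False using k inc_eq_0_iff by simp
qed

lemma is_path_snoc:
  assumes "is_path E ps" "adj E (last ps) w"
  shows "is_path E (ps @ [w])"
  unfolding is_path_def
proof (intro conjI allI impI)
  fix j assume j: "Suc j < length (ps @ [w])"
  show "adj E ((ps @ [w])!j) ((ps @ [w])!Suc j)"
  proof (cases "Suc j < length ps")
    case True
    then show ?thesis using assms(1) unfolding is_path_def by (simp add: nth_append)
  next
    case False
    then have "j = length ps - 1" "ps \<noteq> []" using j assms(1) unfolding is_path_def by auto
    then show ?thesis using assms(2) by (simp add: nth_append last_conv_nth)
  qed
qed simp

lemma has_cycle_if_path_back_edge:
  assumes "is_path E ps" "distinct ps" "j + 2 < length ps" "adj E (last ps) (ps!j)"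
  shows "has_cycle E"
proof -
  define vs where "vs = drop j ps"
  have hd: "hd vs = ps!j" unfolding vs_def using assms(3) by (simp add: hd_drop_conv_nth)
  have "is_path E vs"
    using assms(1,3) unfolding is_path_def vs_def by auto
  moreover have "last vs = last ps" unfolding vs_def using assms(3) by simp
  ultimately have "is_path E (vs @ [hd vs])" using assms(4) hd by (intro is_path_snoc) auto
  moreover have "length vs \<ge> 3" "distinct vs" using assms(2,3) unfolding vs_def by auto
  ultimately show ?thesis unfolding has_cycle_def by blast
qed

text \<open>A longest path ending at an edge of S cannot be extended, so both S-edges at its last
  vertex lead back into the path, and one of them skips the previous vertex.\<close>
lemma has_cycle_if_no_leaf:
  assumes sg: "simple_graph n E"
    and k0: "k0 < length E" "k0 \<in> S"
    and no_leaf: "\<And>k v. k < length E \<Longrightarrow> k \<in> S \<Longrightarrow> incident E k v \<Longrightarrow>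
                    \<exists>k'<length E. k' \<in> S \<and> k' \<noteq> k \<and> incident E k' v"
  shows "has_cycle E"
proof -
  define P where "P ps \<longleftrightarrow> is_path E ps \<and> distinct ps \<and> set ps \<subseteq> {..<n} \<and>
      (\<exists>k<length E. k \<in> S \<and> incident E k (last ps))" for ps
  have "P [fst (E!k0)]"
    unfolding P_def is_path_def incident_def using k0 simple_graph_edge[OF sg k0(1)] by auto
  moreover have "length ps < Suc n" if "P ps" for ps
    using that card_mono[of "{..<n}" "set ps"] distinct_card[of ps] unfolding P_def by auto
  ultimately obtain ps where ps: "P ps" and longest: "\<And>qs. P qs \<Longrightarrow> length qs \<le> length ps"
    using ex_has_greatest_nat[of P _ length "Suc n"] by blast
  define v where "v = last ps"
  define l where "l = length ps"
  have path: "is_path E ps" "distinct ps" using ps unfolding P_def by auto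
  obtain k1 where k1: "k1 < length E" "k1 \<in> S" "incident E k1 v"
    using ps unfolding P_def v_def by auto
  obtain k2 where k2: "k2 < length E" "k2 \<in> S" "k2 \<noteq> k1" "incident E k2 v"
    using no_leaf[OF k1] by auto
  have returns: "opposite E k v \<in> set ps" if "k < length E" "k \<in> S" "incident E k v" for k
  proof (rule ccontr)
    assume "opposite E k v \<notin> set ps"
    then have "P (ps @ [opposite E k v])"
      using ps is_path_snoc opposite_props[OF sg that(1,3)] that unfolding P_def v_def by auto
    then show False using longest by fastforce
  qed
  have "opposite E k1 v \<noteq> opposite E k2 v"
    using opposite_inj[OF sg k1(1) k2(1) k2(3)[symmetric] k1(3) k2(4)] .
  then obtain k where k: "k < length E" "k \<in> S" "incident E k v"
      and not_prev: "opposite E k v \<noteq> ps!(l - 2)"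
    using k1 k2 by metis
  obtain j where j: "j < l" "ps!j = opposite E k v"
    using returns[OF k] unfolding l_def by (auto simp: in_set_conv_nth)
  have "ps \<noteq> []" using path unfolding is_path_def by simp
  then have "v = ps!(l - 1)" unfolding v_def l_def by (simp add: last_conv_nth)
  then have "j \<noteq> l - 1" using j opposite_props(1)[OF sg k(1,3)] by auto
  moreover have "j \<noteq> l - 2" using j not_prev by auto
  ultimately have "j + 2 < length ps" using j unfolding l_def by linarith
  then show ?thesis
    using has_cycle_if_path_back_edge[OF path] opposite_props(5)[OF sg k(1,3)] j(2)
    unfolding v_def by simp
qed

lemma incidence_kernel_trivial_if_acyclic:
  assumes "simple_graph n E" "\<not> has_cycle E"
    and "\<forall>i<n. (\<Sum>k<length E. inc E i k * e k) = 0"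
  shows "\<forall>k<length E. e k = 0"
  using has_cycle_if_no_leaf[OF assms(1), of _ "{k. e k \<noteq> 0}"]
    kernel_support_no_leaf[OF assms(1,3)] assms(2) by auto

text \<open>Vectors of length m are functions vanishing from m on; this makes the unit sphere a
  closed subset of a compact product of intervals.\<close>
lemma compact_unit_sphere_lessThan:
  fixes m :: nat
  shows "compact ((\<Pi>\<^sub>E k\<in>UNIV. if k < m then {-1..1::real} else {0}) \<inter> {e. (\<Sum>k<m. (e k)\<^sup>2) = 1})"
proof (rule compact_Int_closed)
  have "compactin (powertop_real UNIV) (\<Pi>\<^sub>E k\<in>UNIV. if k < m then {-1..1::real} else {0})"
    by (simp add: compactin_PiE)
  then show "compact (\<Pi>\<^sub>E k\<in>UNIV. if k < m then {-1..1::real} else {0})"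
    by (simp add: euclidean_product_topology)
  have "continuous_on UNIV (\<lambda>e :: nat \<Rightarrow> real. e k)" for k by simp
  then have "continuous_on UNIV (\<lambda>e :: nat \<Rightarrow> real. \<Sum>k<m. (e k)\<^sup>2)"
    by (intro continuous_intros) auto
  then show "closed {e :: nat \<Rightarrow> real. (\<Sum>k<m. (e k)\<^sup>2) = 1}"
    by (intro closed_Collect_eq continuous_on_const)
qed

text \<open>An injective linear map is bounded below on the unit sphere, which is compact; the bound
  extends to all vectors by homogeneity.\<close>
lemma injective_linear_map_bounded_below:
  fixes a :: "nat \<Rightarrow> nat \<Rightarrow> real"
  assumes inj: "\<And>e. \<forall>i<n. (\<Sum>k<m. a i k * e k) = 0 \<Longrightarrow> \<forall>k<m. e k = 0"
  shows "\<exists>L>0. \<forall>e. L * (\<Sum>k<m. (e k)\<^sup>2) \<le> (\<Sum>i<n. (\<Sum>k<m. a i k * e k)\<^sup>2)"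
proof (cases "m = 0")
  case True
  then show ?thesis by (intro exI[of _ 1]) (simp add: sum_nonneg)
next
  case False
  define F where "F e = (\<Sum>i<n. (\<Sum>k<m. a i k * e k)\<^sup>2)" for e :: "nat \<Rightarrow> real"
  define g where "g e = (\<Sum>k<m. (e k)\<^sup>2)" for e :: "nat \<Rightarrow> real"
  define sphere where "sphere = (\<Pi>\<^sub>E k\<in>UNIV. if k < m then {-1..1::real} else {0}) \<inter> {e. g e = 1}"
  have "compact sphere" unfolding sphere_def g_def by (rule compact_unit_sphere_lessThan)
  have "continuous_on UNIV (\<lambda>e :: nat \<Rightarrow> real. e k)" for k by simp
  then have "continuous_on UNIV F" unfolding F_def by (intro continuous_intros) auto
  have F_nonneg: "F e \<ge> 0" for e unfolding F_def by (simp add: sum_nonneg)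
  have g_nonneg: "g e \<ge> 0" for e unfolding g_def by (simp add: sum_nonneg)
  have component_le: "\<bar>e k\<bar> \<le> sqrt (g e)" if "k < m" for e k
    using member_le_sum[of k "{..<m}" "\<lambda>k. (e k)\<^sup>2"] that unfolding g_def
    by (simp add: real_le_rsqrt)
  define normalize where "normalize e k = (if k < m then e k / sqrt (g e) else 0)" for e k
  have normalize_sphere: "normalize e \<in> sphere" if "g e > 0" for e
  proof -
    have "\<bar>e k / sqrt (g e)\<bar> \<le> 1" if "k < m" for k
      using component_le[OF that] \<open>g e > 0\<close> by (simp add: abs_divide)
    moreover have "g (normalize e) = 1"
      using \<open>g e > 0\<close> unfolding g_def normalize_def
      by (simp add: power_divide sum_divide_distrib[symmetric] g_def)
    ultimately show ?thesis unfolding sphere_def normalize_def by (auto simp: abs_le_iff simp del: abs_divide)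
  qed
  have F_normalize: "F (normalize e) = F e / g e" for e
    unfolding F_def normalize_def
    by (simp add: sum_divide_distrib[symmetric] power_divide times_divide_eq_right g_nonneg)
  have "g (\<lambda>_. 1) > 0" using False unfolding g_def by simp
  then have "sphere \<noteq> {}" using normalize_sphere by blast
  then obtain e0 where e0: "e0 \<in> sphere" and minimal: "\<And>e. e \<in> sphere \<Longrightarrow> F e0 \<le> F e"
    using continuous_attains_inf[OF \<open>compact sphere\<close> _ continuous_on_subset[OF \<open>continuous_on UNIV F\<close>]] by blast
  have "F e0 \<noteq> 0"
  proof
    assume "F e0 = 0"
    then have "\<forall>i<n. (\<Sum>k<m. a i k * e0 k) = 0"
      unfolding F_def by (simp add: sum_nonneg_eq_0_iff)
    then have "\<forall>k<m. e0 k = 0" by (rule inj)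
    then have "g e0 = 0" unfolding g_def by simp
    then show False using e0 unfolding sphere_def by simp
  qed
  have "F e0 * g e \<le> F e" for e
  proof (cases "g e = 0")
    case True
    then show ?thesis using F_nonneg by simp
  next
    case False
    then have "g e > 0" using g_nonneg[of e] by simp
    then have "F e0 \<le> F e / g e"
      using minimal[OF normalize_sphere] F_normalize by metis
    then show ?thesis using \<open>g e > 0\<close> by (simp add: le_divide_eq)
  qed
  moreover have "F e0 > 0" using F_nonneg[of e0] \<open>F e0 \<noteq> 0\<close> by simp
  ultimately show ?thesis unfolding F_def g_def by blast
qed

lemma exp_decay_if_derivative_le:
  fixes V V' :: "real \<Rightarrow> real"
  assumes "0 \<le> T"
    and deriv: "\<And>t. t \<in> {0..T} \<Longrightarrow> (V has_real_derivative V' t) (at t within {0..T})"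
    and rate: "\<And>t. t \<in> {0..T} \<Longrightarrow> V' t \<le> - a * V t"
  shows "V T \<le> V 0 * exp (- a * T)"
proof -
  define W where "W t = V t * exp (a * t)" for t
  have W_deriv: "(W has_real_derivative (V' t + a * V t) * exp (a * t)) (at t within {0..T})"
    if "t \<in> {0..T}" for t
    unfolding W_def using deriv[OF that]
    by (auto intro!: derivative_eq_intros simp: algebra_simps)
  have "continuous_on {0..T} W"
    using W_deriv DERIV_continuous continuous_on_eq_continuous_within by blast
  have "W T \<le> W 0"
  proof (rule DERIV_nonpos_imp_decreasing_open[OF \<open>0 \<le> T\<close> _ \<open>continuous_on {0..T} W\<close>])
    fix t assume t: "0 < t" "t < T"
    then have "at t within {0..T} = at t" by (intro at_within_interior) auto
    moreover have "(V' t + a * V t) * exp (a * t) \<le> 0"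
      using rate[of t] t by (simp add: mult_nonpos_nonneg)
    ultimately show "\<exists>y. (W has_real_derivative y) (at t) \<and> y \<le> 0"
      using W_deriv[of t] t by auto
  qed
  then have "V T * exp (a * T) \<le> V 0" unfolding W_def by simp
  then show ?thesis by (simp add: exp_minus field_simps)
qed

definition edge_angle :: "nat \<Rightarrow> (nat \<times> nat) list \<Rightarrow> (nat \<Rightarrow> real) \<Rightarrow> (real \<Rightarrow> nat \<Rightarrow> real)
    \<Rightarrow> real \<Rightarrow> nat \<Rightarrow> real" where
  "edge_angle n E zs \<theta> t k = (\<Sum>i<n. inc E i k * \<theta> t i) - zs k"

lemma err_eq_wrap_edge_angle: "err n E zs \<theta> t k = wrap (edge_angle n E zs \<theta> t k)"
  unfolding err_def edge_angle_def ..

lemma err_has_derivative: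
  assumes "\<And>i. i < n \<Longrightarrow> ((\<lambda>s. \<theta> s i) has_real_derivative \<theta>' i) (at t within S)"
    and "\<bar>err n E zs \<theta> t k\<bar> < pi"
  shows "((\<lambda>s. err n E zs \<theta> s k) has_real_derivative (\<Sum>i<n. inc E i k * \<theta>' i)) (at t within S)"
proof -
  have "((\<lambda>s. edge_angle n E zs \<theta> s k) has_real_derivative (\<Sum>i<n. inc E i k * \<theta>' i))
      (at t within S)"
    unfolding edge_angle_def using assms(1) by (auto intro!: derivative_eq_intros simp: mult.commute)
  moreover have "(wrap has_real_derivative 1) (at (edge_angle n E zs \<theta> t k))"
    using assms(2) by (intro wrap_has_derivative) (simp add: err_eq_wrap_edge_angle)
  ultimately show ?thesis
    using DERIV_chain[of wrap 1] unfolding err_eq_wrap_edge_angle by (simp add: o_def)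
qed

lemma incidence_column_sum:
  assumes "simple_graph n E" "k < length E"
  shows "(\<Sum>i<n. inc E i k) = 0"
proof -
  have "(\<Sum>i<n. inc E i k) = (\<Sum>i<n. of_bool (i = fst (E!k)) - of_bool (i = snd (E!k)))"
    using simple_graph_edge[OF assms] by (intro sum.cong) (auto simp: inc_def)
  also have "\<dots> = 0" using simple_graph_edge[OF assms] by (simp add: sum_subtractf)
  finally show ?thesis .
qed

lemma incidence_rows_sum_eq_0:
  assumes "simple_graph n E"
  shows "(\<Sum>i<n. \<Sum>k<length E. inc E i k * e k) = 0"
proof -
  have "(\<Sum>i<n. \<Sum>k<length E. inc E i k * e k) = (\<Sum>k<length E. e k * (\<Sum>i<n. inc E i k))"
    by (subst sum.swap) (simp add: sum_distrib_left mult.commute)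
  also have "\<dots> = 0" using incidence_column_sum[OF assms] by simp
  finally show ?thesis .
qed

lemma abs_incidence_row_le:
  assumes "\<forall>k<m. \<bar>e k\<bar> \<le> \<delta>"
  shows "\<bar>\<Sum>k<m. inc E i k * e k\<bar> \<le> real m * \<delta>"
proof -
  have "\<bar>inc E i k * e k\<bar> \<le> \<delta>" if "k < m" for k
    using assms that by (auto simp: inc_def)
  then have "(\<Sum>k<m. \<bar>inc E i k * e k\<bar>) \<le> real m * \<delta>"
    using sum_mono[of "{..<m}" "\<lambda>k. \<bar>inc E i k * e k\<bar>" "\<lambda>_. \<delta>"] by simp
  then show ?thesis using sum_abs[of "\<lambda>k. inc E i k * e k" "{..<m}"] by linarith
qed

lemma divide_shift_sub_divide_le:
  fixes r kr u :: real
  assumes "r > 0" "kr > 0" "\<bar>kr * u\<bar> \<le> r / 2"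
  shows "u / (r + kr * u) - u / r \<le> - (kr / (2 * r\<^sup>2)) * u\<^sup>2"
proof -
  define D where "D = r + kr * u"
  have D: "r / 2 \<le> D" "D \<le> 2 * r" using assms unfolding D_def by (auto simp: abs_le_iff)
  then have "u / D - u / r = - (kr * u\<^sup>2) / (r * D)"
    using assms(1) unfolding D_def by (simp add: field_simps power2_eq_square)
  also have "\<dots> \<le> - (kr * u\<^sup>2) / (r * (2 * r))"
    using D assms by (intro divide_left_mono_neg mult_left_mono mult_pos_pos) auto
  also have "\<dots> = - (kr / (2 * r\<^sup>2)) * u\<^sup>2" by (simp add: power2_eq_square field_simps)
  finally show ?thesis unfolding D_def .
qed

text \<open>The columns of the incidence matrix sum to zero, so the speeds 1/(r + kr u) may be
  compared with the common speed 1/r without changing the left-hand side.\<close>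
lemma formation_rate_bound:
  assumes sg: "simple_graph n E" and "r > 0" "kr > 0"
    and coercive: "L * (\<Sum>k<length E. (e k)\<^sup>2) \<le> (\<Sum>i<n. (\<Sum>k<length E. inc E i k * e k)\<^sup>2)"
    and small: "\<forall>k<length E. \<bar>e k\<bar> \<le> \<delta>" "kr * real (length E) * \<delta> \<le> r / 2"
  shows "(\<Sum>k<length E. e k * (\<Sum>i<n. inc E i k / (r + kr * (\<Sum>l<length E. inc E i l * e l))))
    \<le> - (kr * L / (2 * r\<^sup>2)) * (\<Sum>k<length E. (e k)\<^sup>2)"
proof -
  define u where "u i = (\<Sum>k<length E. inc E i k * e k)" for i
  have u_small: "\<bar>kr * u i\<bar> \<le> r / 2" for i
  proof -
    have "kr * \<bar>u i\<bar> \<le> kr * (real (length E) * \<delta>)"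
      using abs_incidence_row_le[OF small(1)] \<open>kr > 0\<close> unfolding u_def
      by (intro mult_left_mono) simp_all
    moreover have "\<bar>kr * u i\<bar> = kr * \<bar>u i\<bar>" using \<open>kr > 0\<close> by (simp add: abs_mult)
    ultimately show ?thesis using small(2) by linarith
  qed
  have "(\<Sum>k<length E. e k * (\<Sum>i<n. inc E i k / (r + kr * u i)))
      = (\<Sum>k<length E. \<Sum>i<n. inc E i k * e k / (r + kr * u i))"
    by (simp add: sum_distrib_left mult_ac)
  also have "\<dots> = (\<Sum>i<n. \<Sum>k<length E. inc E i k * e k / (r + kr * u i))"
    by (rule sum.swap)
  also have "\<dots> = (\<Sum>i<n. u i / (r + kr * u i))"
    unfolding u_def by (simp add: sum_divide_distrib)
  also have "\<dots> = (\<Sum>i<n. u i / (r + kr * u i) - u i / r)"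
    using incidence_rows_sum_eq_0[OF sg, of e]
    by (simp add: sum_subtractf sum_divide_distrib[symmetric] u_def)
  also have "\<dots> \<le> (\<Sum>i<n. - (kr / (2 * r\<^sup>2)) * (u i)\<^sup>2)"
    using divide_shift_sub_divide_le[OF \<open>r > 0\<close> \<open>kr > 0\<close> u_small] by (intro sum_mono) auto
  also have "\<dots> = - (kr / (2 * r\<^sup>2)) * (\<Sum>i<n. (u i)\<^sup>2)" by (simp add: sum_distrib_left)
  also have "\<dots> \<le> - (kr / (2 * r\<^sup>2)) * (L * (\<Sum>k<length E. (e k)\<^sup>2))"
    using coercive \<open>r > 0\<close> \<open>kr > 0\<close> unfolding u_def by (intro mult_left_mono_neg) auto
  finally show ?thesis unfolding u_def by simp
qed

lemma formation_energy_decay: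
  fixes n :: nat and E :: "(nat \<times> nat) list" and zs :: "nat \<Rightarrow> real"
    and \<theta> :: "real \<Rightarrow> nat \<Rightarrow> real"
  defines "e \<equiv> err n E zs \<theta>"
  assumes sg: "simple_graph n E" and "r > 0" "kr > 0"
    and coercive: "\<And>e. L * (\<Sum>k<length E. (e k)\<^sup>2) \<le> (\<Sum>i<n. (\<Sum>k<length E. inc E i k * e k)\<^sup>2)"
    and flow: "\<forall>t\<ge>0. \<forall>i<n. ((\<lambda>s. \<theta> s i) has_real_derivative
          1 / (r + kr * (\<Sum>k<length E. inc E i k * e t k))) (at t within {0..})"
    and "\<delta> < pi" "kr * real (length E) * \<delta> \<le> r / 2"
    and "0 \<le> T" and small: "\<forall>s\<in>{0..T}. \<forall>k<length E. \<bar>e s k\<bar> \<le> \<delta>"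
  shows "(\<Sum>k<length E. (e T k)\<^sup>2) \<le> (\<Sum>k<length E. (e 0 k)\<^sup>2) * exp (- (kr * L / r\<^sup>2) * T)"
proof (rule exp_decay_if_derivative_le[OF \<open>0 \<le> T\<close>])
  define \<omega> where "\<omega> t i = 1 / (r + kr * (\<Sum>k<length E. inc E i k * e t k))" for t i
  fix t assume t: "t \<in> {0..T}"
  have "((\<lambda>s. e s k) has_real_derivative (\<Sum>i<n. inc E i k * \<omega> t i)) (at t within {0..T})"
    if "k < length E" for k
    unfolding e_def
  proof (rule err_has_derivative)
    show "((\<lambda>s. \<theta> s i) has_real_derivative \<omega> t i) (at t within {0..T})" if "i < n" for i
    proof -
      have "((\<lambda>s. \<theta> s i) has_real_derivative \<omega> t i) (at t within {0..})"
        using flow t that unfolding \<omega>_def by simp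
      then show ?thesis by (rule has_field_derivative_subset) auto
    qed
    show "\<bar>err n E zs \<theta> t k\<bar> < pi" using small t \<open>k < length E\<close> \<open>\<delta> < pi\<close> unfolding e_def by force
  qed
  then show "((\<lambda>s. \<Sum>k<length E. (e s k)\<^sup>2) has_real_derivative
      (\<Sum>k<length E. 2 * e t k * (\<Sum>i<n. inc E i k * \<omega> t i))) (at t within {0..T})"
    by (auto intro!: derivative_eq_intros simp: mult_ac)
  have rate: "(\<Sum>k<length E. e t k * (\<Sum>i<n. inc E i k * \<omega> t i))
      \<le> - (kr * L / (2 * r\<^sup>2)) * (\<Sum>k<length E. (e t k)\<^sup>2)"
    using formation_rate_bound[OF sg \<open>r > 0\<close> \<open>kr > 0\<close> coercive[of "e t"] _
        \<open>kr * real (length E) * \<delta> \<le> r / 2\<close>] small t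
    unfolding \<omega>_def by simp
  have "(\<Sum>k<length E. 2 * e t k * (\<Sum>i<n. inc E i k * \<omega> t i))
      = 2 * (\<Sum>k<length E. e t k * (\<Sum>i<n. inc E i k * \<omega> t i))"
    by (simp add: sum_distrib_left mult.assoc)
  then show "(\<Sum>k<length E. 2 * e t k * (\<Sum>i<n. inc E i k * \<omega> t i))
      \<le> - (kr * L / r\<^sup>2) * (\<Sum>k<length E. (e t k)\<^sup>2)"
    using rate \<open>r > 0\<close> by (simp add: field_simps)
qed

text \<open>Proved at the first time some function reaches c.\<close>
lemma continuous_family_stays_above:
  fixes g :: "'i \<Rightarrow> real \<Rightarrow> real"
  assumes "finite K" and cont: "\<And>k. k \<in> K \<Longrightarrow> continuous_on {0..} (g k)"
    and "c < c'" and start: "\<And>k. k \<in> K \<Longrightarrow> c \<le> g k 0"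
    and improve: "\<And>T. 0 \<le> T \<Longrightarrow> \<forall>s\<in>{0..T}. \<forall>k\<in>K. c \<le> g k s \<Longrightarrow> \<forall>k\<in>K. c' \<le> g k T"
  shows "\<forall>t\<ge>0. \<forall>k\<in>K. c \<le> g k t"
proof (rule ccontr)
  assume "\<not> ?thesis"
  then obtain t1 k1 where t1: "0 \<le> t1" "k1 \<in> K" "g k1 t1 < c" by force
  define Z where "Z = (\<Union>k\<in>K. {0..t1} \<inter> g k -` {..c})"
  have "closed Z" unfolding Z_def using \<open>finite K\<close> cont
    by (intro closed_UN ballI continuous_closed_preimage continuous_on_subset[OF cont]) auto
  then have "compact ({0..t1} \<inter> Z)" by (intro compact_Int_closed) auto
  moreover have "{0..t1} \<inter> Z = Z" unfolding Z_def by auto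
  ultimately have "compact Z" by simp
  moreover have "t1 \<in> Z" unfolding Z_def using t1 less_imp_le by fastforce
  ultimately obtain T where "T \<in> Z" and first: "\<forall>s\<in>Z. T \<le> s"
    using compact_attains_inf[of Z] by auto
  then obtain k0 where k0: "k0 \<in> K" "0 \<le> T" "T \<le> t1" "g k0 T \<le> c" unfolding Z_def by auto
  have "c' \<le> g k0 T"
  proof (cases "T = 0")
    case True
    then show ?thesis using improve[of 0] start k0 by auto
  next
    case False
    have "c' \<le> g k0 s" if "s \<in> {0..<T}" for s
    proof -
      have "c \<le> g k s'" if "s' \<in> {0..s}" "k \<in> K" for s' k
      proof -
        have "s' \<notin> Z" using first[rule_format] \<open>s \<in> {0..<T}\<close> that(1) by fastforce
        then show ?thesis using that \<open>s \<in> {0..<T}\<close> k0(3) unfolding Z_def by auto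
      qed
      then show ?thesis using improve[of s] that k0(1) by auto
    qed
    then have "{0..<T} \<subseteq> {0..T} \<inter> g k0 -` {c'..}" by auto
    moreover have "closed ({0..T} \<inter> g k0 -` {c'..})"
      using k0(1) by (intro continuous_closed_preimage continuous_on_subset[OF cont]) auto
    ultimately have "closure {0..<T} \<subseteq> {0..T} \<inter> g k0 -` {c'..}" by (rule closure_minimal)
    then show ?thesis using False k0(2) by auto
  qed
  then show False using k0(4) \<open>c < c'\<close> by simp
qed

lemma abs_le_vnorm:
  assumes "k < m"
  shows "\<bar>v k\<bar> \<le> vnorm m v"
  using member_le_sum[of k "{..<m}" "\<lambda>k. (v k)\<^sup>2"] assms
  unfolding vnorm_def by (simp add: real_le_rsqrt)

lemma formation_error_norm_le_initial:
  fixes n :: nat and E :: "(nat \<times> nat) list" and zs :: "nat \<Rightarrow> real"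
    and \<theta> :: "real \<Rightarrow> nat \<Rightarrow> real"
  defines "e \<equiv> err n E zs \<theta>"
  assumes sg: "simple_graph n E" and "r > 0" "kr > 0" "0 \<le> L"
    and coercive: "\<And>e. L * (\<Sum>k<length E. (e k)\<^sup>2) \<le> (\<Sum>i<n. (\<Sum>k<length E. inc E i k * e k)\<^sup>2)"
    and flow: "\<forall>t\<ge>0. \<forall>i<n. ((\<lambda>s. \<theta> s i) has_real_derivative
          1 / (r + kr * (\<Sum>k<length E. inc E i k * e t k))) (at t within {0..})"
    and "\<delta> < pi" "kr * real (length E) * \<delta> \<le> r / 2"
    and "0 \<le> T" and small: "\<forall>s\<in>{0..T}. \<forall>k<length E. \<bar>e s k\<bar> \<le> \<delta>"
  shows "vnorm (length E) (e T) \<le> vnorm (length E) (e 0)"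
proof -
  have "(\<Sum>k<length E. (e T k)\<^sup>2) \<le> (\<Sum>k<length E. (e 0 k)\<^sup>2) * exp (- (kr * L / r\<^sup>2) * T)"
    using formation_energy_decay[OF sg \<open>r > 0\<close> \<open>kr > 0\<close> coercive flow[unfolded e_def]
        \<open>\<delta> < pi\<close> \<open>kr * real (length E) * \<delta> \<le> r / 2\<close> \<open>0 \<le> T\<close>] small
    unfolding e_def by simp
  moreover have "exp (- (kr * L / r\<^sup>2) * T) \<le> 1"
    using \<open>kr > 0\<close> \<open>0 \<le> L\<close> \<open>0 \<le> T\<close> by simp
  ultimately have "(\<Sum>k<length E. (e T k)\<^sup>2) \<le> (\<Sum>k<length E. (e 0 k)\<^sup>2)"
    using mult_left_le[of _ "\<Sum>k<length E. (e 0 k)\<^sup>2"] by (simp add: sum_nonneg order_trans)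
  then show ?thesis unfolding vnorm_def by simp
qed

text \<open>The wrapped error jumps at \<plusminus>pi, but the cosine of the unwrapped edge angle is
  continuous, so the first-exit argument is run on it.\<close>
lemma formation_error_stays_small:
  fixes n :: nat and E :: "(nat \<times> nat) list" and zs :: "nat \<Rightarrow> real"
    and \<theta> :: "real \<Rightarrow> nat \<Rightarrow> real"
  defines "e \<equiv> err n E zs \<theta>"
  assumes sg: "simple_graph n E" and "r > 0" "kr > 0" "0 \<le> L"
    and coercive: "\<And>e. L * (\<Sum>k<length E. (e k)\<^sup>2) \<le> (\<Sum>i<n. (\<Sum>k<length E. inc E i k * e k)\<^sup>2)"
    and flow: "\<forall>t\<ge>0. \<forall>i<n. ((\<lambda>s. \<theta> s i) has_real_derivative
          1 / (r + kr * (\<Sum>k<length E. inc E i k * e t k))) (at t within {0..})"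
    and "\<delta> < pi" "kr * real (length E) * \<delta> \<le> r / 2"
    and initial: "vnorm (length E) (e 0) < \<delta>"
  shows "\<forall>t\<ge>0. \<forall>k<length E. \<bar>e t k\<bar> \<le> \<delta>"
proof -
  define m where "m = length E"
  define s0 where "s0 = vnorm m (e 0)"
  define \<rho> where "\<rho> = (s0 + \<delta>) / 2"
  have "0 \<le> s0" unfolding s0_def vnorm_def by (simp add: sum_nonneg)
  have "s0 < \<rho>" "\<rho> < \<delta>" "\<rho> \<le> pi" "0 \<le> \<rho>"
    using initial \<open>\<delta> < pi\<close> \<open>0 \<le> s0\<close> unfolding \<rho>_def s0_def m_def by auto
  have bounded: "vnorm m (e T) \<le> s0" if "0 \<le> T" "\<forall>s\<in>{0..T}. \<forall>k<m. \<bar>e s k\<bar> \<le> \<delta>" for T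
    using formation_error_norm_le_initial[OF sg \<open>r > 0\<close> \<open>kr > 0\<close> \<open>0 \<le> L\<close> coercive
        flow[unfolded e_def] \<open>\<delta> < pi\<close> \<open>kr * real (length E) * \<delta> \<le> r / 2\<close> that(1)] that(2)
    unfolding e_def s0_def m_def by simp
  have within_\<rho>: "\<bar>e s k\<bar> \<le> \<rho> \<longleftrightarrow> cos \<rho> \<le> cos (edge_angle n E zs \<theta> s k)" for s k
    unfolding e_def err_eq_wrap_edge_angle using \<open>0 \<le> \<rho>\<close> \<open>\<rho> \<le> pi\<close> by (rule abs_wrap_le_iff_cos_le)
  have within_s0: "\<bar>e s k\<bar> \<le> s0 \<longleftrightarrow> cos s0 \<le> cos (edge_angle n E zs \<theta> s k)" for s k
    unfolding e_def err_eq_wrap_edge_angle using \<open>0 \<le> s0\<close> \<open>s0 < \<rho>\<close> \<open>\<rho> \<le> pi\<close>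
    by (intro abs_wrap_le_iff_cos_le) auto
  have "continuous_on {0..} (\<lambda>s. \<theta> s i)" if "i < n" for i
    using flow that by (intro DERIV_continuous_on) auto
  then have cont: "continuous_on {0..} (\<lambda>s. cos (edge_angle n E zs \<theta> s k))" for k
    unfolding edge_angle_def by (intro continuous_intros) auto
  have "\<forall>s\<ge>0. \<forall>k\<in>{..<m}. cos \<rho> \<le> cos (edge_angle n E zs \<theta> s k)"
  proof (rule continuous_family_stays_above[OF finite_lessThan cont])
    show "cos \<rho> < cos s0"
      using \<open>0 \<le> s0\<close> \<open>s0 < \<rho>\<close> \<open>\<rho> \<le> pi\<close> by (simp add: cos_mono_less_eq)
    show "cos \<rho> \<le> cos (edge_angle n E zs \<theta> 0 k)" if "k \<in> {..<m}" for k
      using abs_le_vnorm[of k m "e 0"] that \<open>s0 < \<rho>\<close> within_\<rho> unfolding s0_def by force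
    fix T assume "0 \<le> T" and above: "\<forall>s\<in>{0..T}. \<forall>k\<in>{..<m}. cos \<rho> \<le> cos (edge_angle n E zs \<theta> s k)"
    have "\<bar>e s k\<bar> \<le> \<delta>" if "s \<in> {0..T}" "k < m" for s k
      using above that within_\<rho>[of s k] \<open>\<rho> < \<delta>\<close> by auto
    then have "vnorm m (e T) \<le> s0" using bounded \<open>0 \<le> T\<close> by blast
    then show "\<forall>k\<in>{..<m}. cos s0 \<le> cos (edge_angle n E zs \<theta> T k)"
      using abs_le_vnorm[of _ m "e T"] within_s0 by fastforce
  qed
  then show ?thesis using within_\<rho> \<open>\<rho> < \<delta>\<close> unfolding m_def by (meson dual_order.trans less_imp_le lessThan_iff)
qed

lemma formation_error_exp_decay:
  fixes n :: nat and E :: "(nat \<times> nat) list" and zs :: "nat \<Rightarrow> real"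
    and \<theta> :: "real \<Rightarrow> nat \<Rightarrow> real"
  defines "e \<equiv> err n E zs \<theta>"
  assumes sg: "simple_graph n E" and "r > 0" "kr > 0" "0 \<le> L"
    and coercive: "\<And>e. L * (\<Sum>k<length E. (e k)\<^sup>2) \<le> (\<Sum>i<n. (\<Sum>k<length E. inc E i k * e k)\<^sup>2)"
    and flow: "\<forall>t\<ge>0. \<forall>i<n. ((\<lambda>s. \<theta> s i) has_real_derivative
          1 / (r + kr * (\<Sum>k<length E. inc E i k * e t k))) (at t within {0..})"
    and "\<delta> < pi" "kr * real (length E) * \<delta> \<le> r / 2"
    and initial: "vnorm (length E) (e 0) < \<delta>" and "0 \<le> t"
  shows "vnorm (length E) (e t) \<le> vnorm (length E) (e 0) * exp (- (kr * L / (2 * r\<^sup>2)) * t)"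
proof -
  have "\<forall>s\<in>{0..t}. \<forall>k<length E. \<bar>e s k\<bar> \<le> \<delta>"
    using formation_error_stays_small[OF sg \<open>r > 0\<close> \<open>kr > 0\<close> \<open>0 \<le> L\<close> coercive flow[unfolded e_def]
        \<open>\<delta> < pi\<close> \<open>kr * real (length E) * \<delta> \<le> r / 2\<close> initial[unfolded e_def]]
    unfolding e_def by simp
  then have "(\<Sum>k<length E. (e t k)\<^sup>2) \<le> (\<Sum>k<length E. (e 0 k)\<^sup>2) * exp (- (kr * L / r\<^sup>2) * t)"
    using formation_energy_decay[OF sg \<open>r > 0\<close> \<open>kr > 0\<close> coercive flow[unfolded e_def]
        \<open>\<delta> < pi\<close> \<open>kr * real (length E) * \<delta> \<le> r / 2\<close> \<open>0 \<le> t\<close>]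
    unfolding e_def by blast
  then have "(vnorm (length E) (e t))\<^sup>2 \<le> (vnorm (length E) (e 0) * exp (- (kr * L / (2 * r\<^sup>2)) * t))\<^sup>2"
    unfolding vnorm_def by (simp add: sum_nonneg power_mult_distrib exp_double[symmetric])
  moreover have "0 \<le> vnorm (length E) (e 0) * exp (- (kr * L / (2 * r\<^sup>2)) * t)"
    unfolding vnorm_def by (simp add: sum_nonneg)
  ultimately show ?thesis by (rule power2_le_imp_le)
qed

theorem theorem2:
  fixes n :: nat and E :: "(nat \<times> nat) list" and r kr :: real and zs :: "nat \<Rightarrow> real"
  assumes "n \<ge> 2"
    and "simple_graph n E"
    and "graph_connected n E"
    and "\<not> has_cycle E"
    and "r > 0" and "kr > 0"
    and "r - pi * kr * (MAX i\<in>{0..<n}. real (card (nbrs E i))) > 0"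
  shows "\<exists>\<delta>>0. \<exists>c>0. \<exists>a>0. \<forall>\<theta> :: real \<Rightarrow> nat \<Rightarrow> real.
     ((\<forall>t\<ge>0. \<forall>i<n. ((\<lambda>s. \<theta> s i) has_real_derivative
          1 / (r + kr * (\<Sum>k<length E. inc E i k * err n E zs \<theta> t k))) (at t within {0..}))
      \<and> vnorm (length E) (err n E zs \<theta> 0) < \<delta>)
     \<longrightarrow> (\<forall>t\<ge>0. vnorm (length E) (err n E zs \<theta> t)
              \<le> c * vnorm (length E) (err n E zs \<theta> 0) * exp (- a * t))"
proof -
  obtain L where "L > 0" and coercive:
      "\<And>e. L * (\<Sum>k<length E. (e k)\<^sup>2) \<le> (\<Sum>i<n. (\<Sum>k<length E. inc E i k * e k)\<^sup>2)"
    using injective_linear_map_bounded_below[OF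
        incidence_kernel_trivial_if_acyclic[OF \<open>simple_graph n E\<close> \<open>\<not> has_cycle E\<close>]] by blast
  define \<delta> where "\<delta> = min (pi / 2) (r / (2 * kr * (real (length E) + 1)))"
  have "0 < \<delta>" "\<delta> < pi"
    using \<open>r > 0\<close> \<open>kr > 0\<close> pi_gt_zero unfolding \<delta>_def by (auto simp: min_less_iff_disj)
  have "\<delta> \<le> r / (2 * kr * (real (length E) + 1))" unfolding \<delta>_def by simp
  then have "\<delta> * (2 * kr * (real (length E) + 1)) \<le> r"
    using \<open>kr > 0\<close> by (simp add: pos_le_divide_eq)
  then have "kr * real (length E) * \<delta> \<le> r / 2"
    using mult_pos_pos[OF \<open>kr > 0\<close> \<open>0 < \<delta>\<close>] by (simp add: algebra_simps)
  have "\<forall>\<theta> :: real \<Rightarrow> nat \<Rightarrow> real.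
     ((\<forall>t\<ge>0. \<forall>i<n. ((\<lambda>s. \<theta> s i) has_real_derivative
          1 / (r + kr * (\<Sum>k<length E. inc E i k * err n E zs \<theta> t k))) (at t within {0..}))
      \<and> vnorm (length E) (err n E zs \<theta> 0) < \<delta>)
     \<longrightarrow> (\<forall>t\<ge>0. vnorm (length E) (err n E zs \<theta> t)
              \<le> 1 * vnorm (length E) (err n E zs \<theta> 0) * exp (- (kr * L / (2 * r\<^sup>2)) * t))"
    using formation_error_exp_decay[OF \<open>simple_graph n E\<close> \<open>r > 0\<close> \<open>kr > 0\<close> _ coercive _
        \<open>\<delta> < pi\<close> \<open>kr * real (length E) * \<delta> \<le> r / 2\<close>] \<open>L > 0\<close> by simp
  moreover have "0 < kr * L / (2 * r\<^sup>2)" using \<open>L > 0\<close> \<open>r > 0\<close> \<open>kr > 0\<close> by simp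
  ultimately show ?thesis using \<open>0 < \<delta>\<close> zero_less_one by blast
qed

end
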